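(* For any real numbers $a,b$ with $a\neq\pm b$ and any natural number $n\ge1$, \[ \Phi(a,b,2n)=\Phi(a,b,n)\,\Psi(a,b,n). \]
   Context: $\delta(m)=1$ for $m$ odd, $0$ for $m$ even. $\Psi(a,b,n)$, $\Phi(a,b,n)$ are defined by $\Psi(a,b,0)=2$, $\Psi(a,b,1)=1$, $\Psi(a,b,n+1)=(2a-b)^{\delta(n)}\Psi(a,b,n)-a\Psi(a,b,n-1)$ and $\Phi(a,b,0)=0$, $\Phi(a,b,1)=1$, $\Phi(a,b,n+1)=(2a-b)^{\delta(n+1)}\Phi(a,b,n)-a\Phi(a,b,n-1)$ for $n\ge1$. *)

theory Defs
  imports Complex_Main
begin

definition delta :: "nat \<Rightarrow> nat" where
  "delta m = (if odd m then 1 else 0)"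

fun Psi :: "real \<Rightarrow> real \<Rightarrow> nat \<Rightarrow> real" where
  "Psi a b 0 = 2"
| "Psi a b (Suc 0) = 1"
| "Psi a b (Suc (Suc n)) =
     (2*a - b) ^ delta (Suc n) * Psi a b (Suc n) - a * Psi a b n"

fun Phi :: "real \<Rightarrow> real \<Rightarrow> nat \<Rightarrow> real" where
  "Phi a b 0 = 0"
| "Phi a b (Suc 0) = 1"
| "Phi a b (Suc (Suc n)) =
     (2*a - b) ^ delta (Suc (Suc n)) * Phi a b (Suc n) - a * Phi a b n"

end

theory Submission
  imports Defs
begin

text \<open>
  \<open>\<Phi>\<close> is a Lucas sequence whose multiplier alternates between \<open>2a - b\<close> and \<open>1\<close>. It
  obeys an addition formula expressing \<open>\<Phi>(m + n + 1)\<close> through \<open>\<Phi>(m), \<Phi>(m + 1), \<Phi>(n), \<Phi>(n + 1)\<close>,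
  in which the parities of \<open>m\<close> and \<open>n\<close> decide where the factor \<open>2a - b\<close> appears, and
  \<open>\<Psi>(n) = \<Phi>(n + 1) - a \<Phi>(n - 1)\<close>. Taking \<open>m = n - 1\<close> in the addition formula, the parity
  factors vanish and \<open>\<Phi>(2n) = \<Phi>(n) (\<Phi>(n + 1) - a \<Phi>(n - 1)) = \<Phi>(n) \<Psi>(n)\<close>.
  The hypotheses \<open>a \<noteq> \<plusminus>b\<close> are only needed for closed forms of \<open>\<Phi>\<close> and \<open>\<Psi>\<close>, not here.
\<close>

lemma delta_Suc_Suc [simp]: "delta (Suc (Suc n)) = delta n"
  by (simp add: delta_def)

lemma delta_mult_delta_Suc [simp]: "delta n * delta (Suc n) = 0"
  by (simp add: delta_def)

lemma Phi_add:
  "Phi a b (m + n + 1) =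
     (2*a - b) ^ (delta m * delta n) * Phi a b (m + 1) * Phi a b (n + 1)
     - a * (2*a - b) ^ (delta (Suc m) * delta (Suc n)) * Phi a b m * Phi a b n"
proof (induction m rule: induct_nat_012)
  case 0
  show ?case by (simp add: delta_def)
next
  case 1
  show ?case by (simp add: delta_def)
next
  case (ge2 m)
  have rec_mn: "Phi a b (Suc (Suc m) + n + 1) =
      (2*a - b) ^ delta (m + n + 1) * Phi a b (Suc m + n + 1) - a * Phi a b (m + n + 1)"
    by simp
  have rec_m: "Phi a b (Suc (Suc m) + 1) =
      (2*a - b) ^ delta (Suc m) * Phi a b (Suc m + 1) - a * Phi a b (m + 1)"
    by simp
  have rec_m': "Phi a b (Suc m + 1) = (2*a - b) ^ delta m * Phi a b (m + 1) - a * Phi a b m"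
    by simp
  show ?case
    unfolding rec_mn rec_m ge2.IH rec_m'
    by (cases "even m"; cases "even n"; simp add: delta_def algebra_simps)
qed

lemma Psi_eq_Phi: "Psi a b (Suc n) = Phi a b (n + 2) - a * Phi a b n"
proof (induction n rule: induct_nat_012)
  case 0
  show ?case by (simp add: delta_def)
next
  case 1
  show ?case by (simp add: delta_def numeral_3_eq_3)
next
  case (ge2 n)
  have "Psi a b (Suc (Suc (Suc n))) =
      (2*a - b) ^ delta n * Psi a b (Suc (Suc n)) - a * Psi a b (Suc n)"
    by simp
  also have "\<dots> = (2*a - b) ^ delta n * (Phi a b (n + 3) - a * Phi a b (n + 1))
      - a * (Phi a b (n + 2) - a * Phi a b n)"
    using ge2.IH by (simp add: numeral_3_eq_3)
  also have "\<dots> = Phi a b (Suc n + 3) - a * Phi a b (Suc n + 1)"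
    by (simp add: numeral_3_eq_3 numeral_2_eq_2 algebra_simps)
  finally show ?case
    by (simp add: numeral_3_eq_3 numeral_2_eq_2)
qed

theorem theorem13p3:
  fixes a b :: real and n :: nat
  assumes "a \<noteq> b" and "a \<noteq> - b" and "n \<ge> 1"
  shows "Phi a b (2 * n) = Phi a b n * Psi a b n"
proof -
  obtain m where n: "n = Suc m"
    using \<open>n \<ge> 1\<close> by (cases n) auto
  have "2 * n = m + Suc m + 1"
    using n by simp
  then have "Phi a b (2 * n) = Phi a b (m + Suc m + 1)"
    by (simp only:)
  also have "\<dots> = Phi a b (Suc m) * (Phi a b (m + 2) - a * Phi a b m)"
    unfolding Phi_add by (simp add: algebra_simps)
  also have "\<dots> = Phi a b n * Psi a b n"
    using n Psi_eq_Phi by simp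
  finally show ?thesis .
qed

end
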